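(* For positive semidefinite matrices $A,B$ of the same size, $$\operatorname{tr}(A+B)^4-\operatorname{tr}(A^4+B^4)\ge(2^4-2)\operatorname{tr}(A^{1/2}BA^{1/2})^{2}=14\operatorname{tr}(AB)^2.$$ *)

theory Defs
  imports "Jordan_Normal_Form.Schur_Decomposition" "HOL-Library.Complex_Order"
begin

text \<open>Positive semidefinite complex n x n matrices: Hermitian with nonnegative
  quadratic form (the order on complex numbers is that of HOL-Library.Complex_Order,
  i.e. 0 \<le> z iff z is a nonnegative real).\<close>
definition psd_mat :: "nat \<Rightarrow> complex mat \<Rightarrow> bool" where
  "psd_mat n A \<longleftrightarrow> A \<in> carrier_mat n n \<and> mat_adjoint A = A \<and>
     (\<forall>v \<in> carrier_vec n. 0 \<le> conjugate v \<bullet> (A *\<^sub>v v))"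

definition trace :: "'a::comm_monoid_add mat \<Rightarrow> 'a" where
  "trace A = (\<Sum>i<dim_row A. A $$ (i, i))"

definition mat_sqrt :: "complex mat \<Rightarrow> complex mat" where
  "mat_sqrt A = (THE S. psd_mat (dim_row A) S \<and> S * S = A)"

end

theory Submission
  imports Defs
begin

(*
  Write the PSD matrices as squares A = P P and B = Q Q of Hermitian matrices.  Expanding
  (A + B)^4 and rotating products cyclically under the trace gives the identity

    tr (A + B)^4 - tr (A^4 + B^4) - 14 tr ((AB)^2) = 4 tr (X adj(X)) + 6 tr (C adj(C))

  with X = P (A - B) Q and C = AB - BA, and traces of Gram matrices are nonnegative.  Moreover
  tr ((P B P)^2) = tr ((AB)^2) whenever P P = A, which gives the second conjunct.
*)

section \<open>Adjoints\<close>

lemma dim_mat_adjoint [simp]: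
  "dim_row (mat_adjoint A) = dim_col A" "dim_col (mat_adjoint A) = dim_row A"
  unfolding mat_adjoint_def by auto

lemma index_mat_adjoint [simp]:
  "i < dim_col A \<Longrightarrow> j < dim_row A \<Longrightarrow> mat_adjoint A $$ (i, j) = conjugate (A $$ (j, i))"
  by (simp add: mat_adjoint_def mat_of_rows_def)

lemma mat_adjoint_carrier [simp]: "A \<in> carrier_mat n m \<Longrightarrow> mat_adjoint A \<in> carrier_mat m n"
  by (metis dim_mat_adjoint carrier_matD carrier_matI)

lemma row_mat_adjoint [simp]: "i < dim_col A \<Longrightarrow> row (mat_adjoint A) i = conjugate (col A i)"
  by (rule eq_vecI) simp_all

lemma mat_adjoint_adjoint [simp]: "mat_adjoint (mat_adjoint A) = A"
  by (rule eq_matI) simp_all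

lemma mat_adjoint_one [simp]: "mat_adjoint (1\<^sub>m n :: complex mat) = 1\<^sub>m n"
  by (rule eq_matI) simp_all

lemma mat_adjoint_mult:
  fixes A B :: "complex mat"
  assumes "A \<in> carrier_mat n k" "B \<in> carrier_mat k m"
  shows "mat_adjoint (A * B) = mat_adjoint B * mat_adjoint A"
  using assms by (intro eq_matI) (simp_all add: scalar_prod_def sum_conjugate mult.commute)

lemma mat_adjoint_minus:
  fixes A B :: "complex mat"
  assumes "A \<in> carrier_mat n m" "B \<in> carrier_mat n m"
  shows "mat_adjoint (A - B) = mat_adjoint A - mat_adjoint B"
  using assms by (intro eq_matI) simp_all

lemma mat_adjoint_mat_diag: "mat_adjoint (mat_diag n f :: complex mat) = mat_diag n (\<lambda>i. cnj (f i))"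
  by (rule eq_matI) (simp_all add: mat_diag_def)

lemma sesquilinear_mat_adjoint:
  fixes M :: "complex mat"
  assumes M: "M \<in> carrier_mat n k" and v: "v \<in> carrier_vec n" and x: "x \<in> carrier_vec k"
  shows "conjugate v \<bullet> (M *\<^sub>v x) = conjugate (mat_adjoint M *\<^sub>v v) \<bullet> x"
proof -
  have "conjugate v \<bullet> (M *\<^sub>v x) = (\<Sum>i<n. cnj (v $ i) * (\<Sum>j<k. M $$ (i, j) * x $ j))"
    using M v x by (simp add: scalar_prod_def atLeast0LessThan)
  also have "\<dots> = (\<Sum>j<k. (\<Sum>i<n. cnj (v $ i) * M $$ (i, j)) * x $ j)"
    by (simp add: sum_distrib_left sum_distrib_right mult.assoc mult.left_commute) (rule sum.swap)
  also have "\<dots> = conjugate (mat_adjoint M *\<^sub>v v) \<bullet> x"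
    using M v x by (simp add: scalar_prod_def atLeast0LessThan sum_conjugate mult.commute)
  finally show ?thesis .
qed

lemma trace_add:
  fixes A B :: "'a :: comm_ring mat"
  assumes "A \<in> carrier_mat n n" "B \<in> carrier_mat n n"
  shows "trace (A + B) = trace A + trace B"
  using assms by (simp add: trace_def sum.distrib)

lemma trace_minus:
  fixes A B :: "'a :: comm_ring mat"
  assumes "A \<in> carrier_mat n n" "B \<in> carrier_mat n n"
  shows "trace (A - B) = trace A - trace B"
  using assms by (simp add: trace_def sum_subtractf)

lemma trace_mult_comm:
  fixes A B :: "'a :: comm_ring mat"
  assumes "A \<in> carrier_mat n m" "B \<in> carrier_mat m n"
  shows "trace (A * B) = trace (B * A)"
  using assms unfolding trace_def
  by (simp add: scalar_prod_def atLeast0LessThan) (subst sum.swap, simp add: mult.commute)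

text \<open>Closure, associativity, distributivity, additivity of the trace and the adjoint rules,
  specialised to square matrices of a fixed size: in this form the simplifier can discharge all
  carrier side conditions.\<close>

lemmas square_mat_simps =
  mult_carrier_mat[of _ n n _ n] add_carrier_mat[of _ n n] minus_carrier_mat[of _ n n]
  assoc_mult_mat[of _ n n _ n _ n]
  add_mult_distrib_mat[of _ n n _ _ n] mult_add_distrib_mat[of _ n n _ n]
  minus_mult_distrib_mat[of _ n n _ _ n] mult_minus_distrib_mat[of _ n n _ n]
  trace_add[of _ n] trace_minus[of _ n]
  mat_adjoint_mult[of _ n n _ n] mat_adjoint_minus[of _ n n]
  for n :: nat

lemma mat_adjoint_square:
  fixes P :: "complex mat"
  assumes "P \<in> carrier_mat n n" and "mat_adjoint P = P"
  shows "mat_adjoint (P * P) = P * P"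
  using assms by (simp add: mat_adjoint_mult[of _ n n _ n])

lemma trace_rotate4:
  fixes X Y Z W :: "'a :: comm_ring mat"
  assumes "X \<in> carrier_mat n n" "Y \<in> carrier_mat n n" "Z \<in> carrier_mat n n" "W \<in> carrier_mat n n"
  shows "trace (X * (Y * (Z * W))) = trace (Y * (Z * (W * X)))"
proof -
  have "trace (X * (Y * (Z * W))) = trace ((Y * (Z * W)) * X)"
    using assms by (intro trace_mult_comm[of _ n n]) (simp_all add: square_mat_simps[where n = n])
  also have "(Y * (Z * W)) * X = Y * (Z * (W * X))"
    using assms by (simp add: square_mat_simps[where n = n])
  finally show ?thesis .
qed

text \<open>A Gram matrix \<open>X X\<^sup>*\<close> has nonnegative trace, the squared Frobenius norm of \<open>X\<close>.\<close>

lemma trace_mult_adjoint_nonneg: "0 \<le> trace (X * mat_adjoint X :: complex mat)"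
  unfolding trace_def
proof (rule sum_nonneg)
  fix i assume "i \<in> {..<dim_row (X * mat_adjoint X)}"
  hence "(X * mat_adjoint X) $$ (i, i) = (\<Sum>k<dim_col X. X $$ (i, k) * cnj (X $$ (i, k)))"
    by (simp add: scalar_prod_def atLeast0LessThan)
  also have "\<dots> \<ge> 0"
    by (rule sum_nonneg) (metis conjugate_complex_def conjugate_square_positive)
  finally show "0 \<le> (X * mat_adjoint X) $$ (i, i)" .
qed

lemma mat_pow_2:
  fixes A :: "'a :: semiring_1 mat"
  assumes "A \<in> carrier_mat n n"
  shows "A ^\<^sub>m 2 = A * A"
  using assms by (simp add: numeral_2_eq_2)

lemma mat_pow_4:
  fixes A :: "'a :: semiring_1 mat"
  assumes "A \<in> carrier_mat n n"
  shows "A ^\<^sub>m 4 = A * (A * (A * A))"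
  using assms by (simp add: numeral_eq_Suc square_mat_simps[where n = n])

section \<open>The trace identity\<close>

text \<open>Expansion of \<open>tr (A + B)\<^sup>4\<close>: up to cyclic rotation, the 14 mixed words of length four are
  \<open>AAAB\<close>, \<open>AABB\<close>, \<open>ABBB\<close> (four times each) and \<open>ABAB\<close> (twice).\<close>

lemma trace_pow4_expansion:
  fixes A B :: "'a :: comm_ring_1 mat"
  assumes A: "A \<in> carrier_mat n n" and B: "B \<in> carrier_mat n n"
  shows "trace ((A + B) ^\<^sub>m 4) - trace (A ^\<^sub>m 4 + B ^\<^sub>m 4)
       = 4 * trace (A * (A * (A * B))) + 4 * trace (A * (A * (B * B)))
         + 4 * trace (A * (B * (B * B))) + 2 * trace ((A * B) ^\<^sub>m 2)"
proof -
  note rot = trace_rotate4[of _ n]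
  have AAAB: "trace (A * (A * (B * A))) = trace (A * (A * (A * B)))"
    "trace (A * (B * (A * A))) = trace (A * (A * (A * B)))"
    "trace (B * (A * (A * A))) = trace (A * (A * (A * B)))"
    using rot[OF A A A B] rot[OF A A B A] rot[OF A B A A] by simp_all
  have ABBB: "trace (B * (B * (B * A))) = trace (A * (B * (B * B)))"
    "trace (B * (B * (A * B))) = trace (A * (B * (B * B)))"
    "trace (B * (A * (B * B))) = trace (A * (B * (B * B)))"
    using rot[OF A B B B] rot[OF B B B A] rot[OF B B A B] by simp_all
  have AABB: "trace (A * (B * (B * A))) = trace (A * (A * (B * B)))"
    "trace (B * (B * (A * A))) = trace (A * (A * (B * B)))"
    "trace (B * (A * (A * B))) = trace (A * (A * (B * B)))"
    using rot[OF A A B B] rot[OF A B B A] rot[OF B B A A] by simp_all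
  have ABAB: "trace (B * (A * (B * A))) = trace (A * (B * (A * B)))"
    using rot[OF A B A B] by simp
  have sq: "trace ((A * B) ^\<^sub>m 2) = trace (A * (B * (A * B)))"
    using A B by (simp add: mat_pow_2[of _ n] square_mat_simps[where n = n])
  show ?thesis
    using A B unfolding sq
    by (simp add: mat_pow_4[of _ n] square_mat_simps[where n = n] AAAB ABBB AABB ABAB algebra_simps)
qed

lemma trace_commutator_gram:
  fixes A B :: "complex mat"
  assumes A: "A \<in> carrier_mat n n" and B: "B \<in> carrier_mat n n"
    and hA: "mat_adjoint A = A" and hB: "mat_adjoint B = B"
  shows "trace ((A * B - B * A) * mat_adjoint (A * B - B * A))
       = 2 * trace (A * (A * (B * B))) - 2 * trace ((A * B) ^\<^sub>m 2)"
proof -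
  note rot = trace_rotate4[of _ n]
  have "mat_adjoint (A * B - B * A) = B * A - A * B"
    using A B by (simp add: square_mat_simps[where n = n] hA hB)
  moreover have "trace (B * (A * (B * A))) = trace (A * (B * (A * B)))"
    "trace (B * (A * (A * B))) = trace (A * (A * (B * B)))"
    "trace (A * (B * (B * A))) = trace (A * (A * (B * B)))"
    using rot[OF A B A B] rot[OF B B A A] rot[OF A A B B] rot[OF A B B A] by simp_all
  ultimately show ?thesis
    using A B
    by (simp add: mat_pow_2[of _ n] square_mat_simps[where n = n] algebra_simps)
qed

lemma trace_sandwich_gram:
  fixes A B P Q :: "complex mat"
  assumes A: "A \<in> carrier_mat n n" and B: "B \<in> carrier_mat n n"
    and P: "P \<in> carrier_mat n n" and Q: "Q \<in> carrier_mat n n"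
    and hP: "mat_adjoint P = P" and hQ: "mat_adjoint Q = Q"
    and PP: "P * P = A" and QQ: "Q * Q = B"
  shows "trace ((P * (A - B) * Q) * mat_adjoint (P * (A - B) * Q))
       = trace (A * (A * (A * B))) - 2 * trace (A * (A * (B * B))) + trace (A * (B * (B * B)))"
proof -
  note rot = trace_rotate4[of _ n]
  have AB: "A - B \<in> carrier_mat n n" using B by (rule minus_carrier_mat)
  have hA: "mat_adjoint A = A" and hB: "mat_adjoint B = B"
    using mat_adjoint_square[OF P hP] mat_adjoint_square[OF Q hQ] by (simp_all only: PP QQ)
  have "trace ((P * (A - B) * Q) * mat_adjoint (P * (A - B) * Q))
      = trace (P * ((A - B) * (B * ((A - B) * P))))"
    using A B P Q AB
    by (simp add: square_mat_simps[where n = n] hP hQ hA hB flip: QQ)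
  also have "\<dots> = trace (((A - B) * (B * ((A - B) * P))) * P)"
    using P AB B by (intro trace_mult_comm[of _ n n]) (simp_all add: square_mat_simps[where n = n])
  also have "\<dots> = trace ((A - B) * (B * ((A - B) * A)))"
    using P AB B by (simp only: assoc_mult_mat[of _ n n _ n _ n] mult_carrier_mat[of _ n n _ n] PP)
  also have "\<dots> = trace (A * ((A - B) * (B * (A - B))))"
    using rot[OF A AB B AB] by simp
  also have "\<dots> = trace (A * (A * (A * B))) - 2 * trace (A * (A * (B * B))) + trace (A * (B * (B * B)))"
  proof -
    have "trace (A * (A * (B * A))) = trace (A * (A * (A * B)))"
      "trace (A * (B * (B * A))) = trace (A * (A * (B * B)))"
      using rot[OF A A A B] rot[OF A A B B] by simp_all
    then show ?thesis
      using A B by (simp add: square_mat_simps[where n = n] algebra_simps)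
  qed
  finally show ?thesis .
qed

text \<open>The core inequality: \<open>tr (A + B)\<^sup>4 - tr (A\<^sup>4 + B\<^sup>4) \<ge> 14 tr ((AB)\<^sup>2)\<close>, since the difference is
  \<open>4 tr (X X\<^sup>*) + 6 tr (C C\<^sup>*)\<close> for \<open>X = P (A - B) Q\<close> and \<open>C = AB - BA\<close>.\<close>

lemma quartic_trace_inequality:
  fixes A B P Q :: "complex mat"
  assumes A: "A \<in> carrier_mat n n" and B: "B \<in> carrier_mat n n"
    and P: "P \<in> carrier_mat n n" and Q: "Q \<in> carrier_mat n n"
    and hP: "mat_adjoint P = P" and hQ: "mat_adjoint Q = Q"
    and PP: "P * P = A" and QQ: "Q * Q = B"
  shows "14 * trace ((A * B) ^\<^sub>m 2) \<le> trace ((A + B) ^\<^sub>m 4) - trace (A ^\<^sub>m 4 + B ^\<^sub>m 4)"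
proof -
  define X where "X = P * (A - B) * Q"
  define C where "C = A * B - B * A"
  have hA: "mat_adjoint A = A" and hB: "mat_adjoint B = B"
    using mat_adjoint_square[OF P hP] mat_adjoint_square[OF Q hQ] by (simp_all only: PP QQ)
  have "trace ((A + B) ^\<^sub>m 4) - trace (A ^\<^sub>m 4 + B ^\<^sub>m 4) - 14 * trace ((A * B) ^\<^sub>m 2)
      = 4 * trace (X * mat_adjoint X) + 6 * trace (C * mat_adjoint C)"
    unfolding X_def C_def trace_pow4_expansion[OF A B] trace_commutator_gram[OF A B hA hB]
      trace_sandwich_gram[OF A B P Q hP hQ PP QQ]
    by (simp add: algebra_simps)
  moreover have "0 \<le> 4 * trace (X * mat_adjoint X) + 6 * trace (C * mat_adjoint C)"
    by (intro add_nonneg_nonneg mult_nonneg_nonneg trace_mult_adjoint_nonneg)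
      (simp_all add: less_eq_complex_def)
  ultimately show ?thesis by (metis diff_ge_0_iff_ge)
qed

lemma trace_sqrt_sandwich_sq:
  fixes A B P :: "'a :: comm_ring_1 mat"
  assumes B: "B \<in> carrier_mat n n" and P: "P \<in> carrier_mat n n" and PP: "P * P = A"
  shows "trace ((P * B * P) ^\<^sub>m 2) = trace ((A * B) ^\<^sub>m 2)"
proof -
  have A: "A \<in> carrier_mat n n" using PP P by auto
  have "trace ((P * B * P) ^\<^sub>m 2) = trace (P * (B * (P * (P * (B * P)))))"
    using B P by (simp add: mat_pow_2[of _ n] square_mat_simps[where n = n])
  also have "\<dots> = trace ((B * (P * (P * (B * P)))) * P)"
    using B P by (intro trace_mult_comm[of _ n n]) (simp_all add: square_mat_simps[where n = n])
  also have "\<dots> = trace (B * (A * (B * A)))"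
    using B P by (simp add: square_mat_simps[where n = n] flip: PP)
  also have "\<dots> = trace ((A * B) ^\<^sub>m 2)"
    using trace_rotate4[OF A B A B] A B by (simp add: mat_pow_2[of _ n] square_mat_simps[where n = n])
  finally show ?thesis .
qed

section \<open>Unitary matrices\<close>

definition unitary_mat :: "nat \<Rightarrow> complex mat \<Rightarrow> bool" where
  "unitary_mat n U \<longleftrightarrow> U \<in> carrier_mat n n \<and> mat_adjoint U * U = 1\<^sub>m n"

lemma unitary_mat_right_inverse:
  assumes "unitary_mat n U"
  shows "U * mat_adjoint U = 1\<^sub>m n"
  using assms unfolding unitary_mat_def by (metis mat_adjoint_carrier mat_mult_left_right_inverse)

lemma unitary_mat_mult:
  assumes U: "unitary_mat n U" and V: "unitary_mat n V"
  shows "unitary_mat n (U * V)"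
proof -
  have cU: "U \<in> carrier_mat n n" and cV: "V \<in> carrier_mat n n"
    and UU: "mat_adjoint U * U = 1\<^sub>m n" and VV: "mat_adjoint V * V = 1\<^sub>m n"
    using U V unfolding unitary_mat_def by auto
  have "mat_adjoint (U * V) * (U * V) = mat_adjoint V * ((mat_adjoint U * U) * V)"
    using cU cV by (simp add: square_mat_simps[where n = n])
  also have "\<dots> = 1\<^sub>m n"
    using cV by (simp add: UU VV)
  finally show ?thesis
    using cU cV unfolding unitary_mat_def by simp
qed

lemma unitary_mat_cancel:
  assumes U: "unitary_mat n U" and X: "X \<in> carrier_mat n k"
  shows "mat_adjoint U * (U * X) = X" and "U * (mat_adjoint U * X) = X"
proof -
  have cU: "U \<in> carrier_mat n n" and UU: "mat_adjoint U * U = 1\<^sub>m n"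
    using U unfolding unitary_mat_def by auto
  have UU': "U * mat_adjoint U = 1\<^sub>m n"
    using U by (rule unitary_mat_right_inverse)
  have "mat_adjoint U * (U * X) = (mat_adjoint U * U) * X"
    using cU X by (simp add: assoc_mult_mat[of _ n n _ n _ k])
  thus "mat_adjoint U * (U * X) = X"
    using X by (simp add: UU)
  have "U * (mat_adjoint U * X) = (U * mat_adjoint U) * X"
    using cU X by (simp add: assoc_mult_mat[of _ n n _ n _ k])
  thus "U * (mat_adjoint U * X) = X"
    using X by (simp add: UU')
qed

lemma unitary_similar_iff:
  assumes U: "unitary_mat n U" and A: "A \<in> carrier_mat n n" and D: "D \<in> carrier_mat n n"
  shows "A = U * D * mat_adjoint U \<longleftrightarrow> mat_adjoint U * A * U = D"
proof -
  have cU: "U \<in> carrier_mat n n" and UU: "mat_adjoint U * U = 1\<^sub>m n"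
    using U unfolding unitary_mat_def by auto
  have UU': "U * mat_adjoint U = 1\<^sub>m n"
    using U by (rule unitary_mat_right_inverse)
  have "mat_adjoint U * (U * D * mat_adjoint U) * U = D"
    using cU D by (simp add: square_mat_simps[where n = n] unitary_mat_cancel[OF U, where k = n] UU)
  moreover have "U * (mat_adjoint U * A * U) * mat_adjoint U = A"
    using cU A by (simp add: square_mat_simps[where n = n] unitary_mat_cancel[OF U, where k = n] UU')
  ultimately show ?thesis by auto
qed

definition normalize_vec :: "complex vec \<Rightarrow> complex vec" where
  "normalize_vec w = (1 / complex_of_real (sqrt (Re (w \<bullet>c w)))) \<cdot>\<^sub>v w"

lemma inverse_sqrt_scale:
  fixes z :: complex
  assumes "0 \<le> z" "z \<noteq> 0"
  shows "(1 / complex_of_real (sqrt (Re z))) * (1 / complex_of_real (sqrt (Re z))) * z = 1"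
proof -
  define r where "r = Re z"
  have z: "z = complex_of_real r" and r: "r > 0"
    using assms by (auto simp: r_def less_eq_complex_def complex_eq_iff)
  have "complex_of_real ((1 / sqrt r) * (1 / sqrt r) * r) = 1"
    using r by simp
  thus ?thesis
    unfolding z by (simp only: Re_complex_of_real of_real_mult of_real_divide of_real_1)
qed

lemma unitary_mat_of_orthogonal_cols:
  assumes ws: "set ws \<subseteq> carrier_vec n" "length ws = n" and orth: "corthogonal ws"
  shows "unitary_mat n (mat_of_cols n (map normalize_vec ws))"
proof -
  define c where "c w = 1 / complex_of_real (sqrt (Re (w \<bullet>c w)))" for w
  define U where "U = mat_of_cols n (map normalize_vec ws)"
  have wsi: "i < n \<Longrightarrow> ws ! i \<in> carrier_vec n" for i
    using ws by auto
  have colU: "i < n \<Longrightarrow> col U i = c (ws ! i) \<cdot>\<^sub>v ws ! i" for i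
    using ws wsi unfolding U_def normalize_vec_def c_def by (simp add: col_mat_of_cols)
  have orth_iff: "i < n \<Longrightarrow> j < n \<Longrightarrow> (ws ! j \<bullet>c ws ! i = 0) = (j \<noteq> i)" for i j
    using orth ws(2) by (simp add: corthogonal_def)
  have U: "U \<in> carrier_mat n n"
    unfolding U_def using ws(2) by (metis length_map mat_of_cols_carrier(1))
  have "mat_adjoint U * U = 1\<^sub>m n"
  proof (rule eq_matI)
    fix i j assume "i < dim_row (1\<^sub>m n :: complex mat)" "j < dim_col (1\<^sub>m n :: complex mat)"
    hence i: "i < n" and j: "j < n" by simp_all
    have "(mat_adjoint U * U) $$ (i, j) = conjugate (col U i) \<bullet> col U j"
      using U i j by simp
    also have "\<dots> = c (ws ! i) * c (ws ! j) * (conjugate (ws ! i) \<bullet> ws ! j)"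
      using wsi[OF i] wsi[OF j] by (simp add: colU[OF i] colU[OF j] conjugate_smult_vec c_def mult.assoc)
    also have "conjugate (ws ! i) \<bullet> ws ! j = ws ! j \<bullet>c ws ! i"
      using wsi[OF i] wsi[OF j] by (simp add: conjugate_vec_sprod_comm)
    also have "c (ws ! i) * c (ws ! j) * (ws ! j \<bullet>c ws ! i) = (1\<^sub>m n :: complex mat) $$ (i, j)"
    proof (cases "i = j")
      case True
      have "0 \<le> ws ! i \<bullet>c ws ! i" "ws ! i \<bullet>c ws ! i \<noteq> 0"
        using orth_iff[OF i i] by auto
      hence "c (ws ! i) * c (ws ! i) * (ws ! i \<bullet>c ws ! i) = 1"
        unfolding c_def by (rule inverse_sqrt_scale)
      with True i show ?thesis by simp
    qed (use i j orth_iff[OF i j] in simp)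
    finally show "(mat_adjoint U * U) $$ (i, j) = (1\<^sub>m n :: complex mat) $$ (i, j)" .
  qed (use U in simp_all)
  with U show ?thesis
    unfolding U_def unitary_mat_def by simp
qed

text \<open>Every nonzero vector is, up to a scalar, the first column of a unitary matrix
  (complete it to a basis and apply Gram-Schmidt).\<close>

lemma unitary_mat_with_first_column:
  assumes v: "v \<in> carrier_vec n" and v0: "v \<noteq> 0\<^sub>v n"
  obtains U c where "unitary_mat n U" "col U 0 = c \<cdot>\<^sub>v v"
proof -
  interpret cof_vec_space n "TYPE(complex)" .
  define b where "b = basis_completion v"
  define ws where "ws = gram_schmidt n b"
  have dist_b: "distinct b" and indep: "\<not> lin_dep (set b)" and b: "set b \<subseteq> carrier_vec n"
    and hd_b: "hd b = v" and len_b: "length b = n"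
    using basis_completion[OF v v0, folded b_def] by blast+
  have "n \<noteq> 0"
    using v v0 by (auto intro: eq_vecI)
  with hd_b len_b obtain vs where b_eq: "b = v # vs"
    by (cases b) simp_all
  have ws: "set ws \<subseteq> carrier_vec n" "corthogonal ws" "length ws = n"
    using gram_schmidt_result[OF b dist_b indep ws_def] len_b by simp_all
  have "ws ! 0 = v"
    using gram_schmidt_hd[OF v, of vs] \<open>n \<noteq> 0\<close> ws(3)
    unfolding ws_def b_eq by (metis hd_conv_nth length_0_conv)
  hence "col (mat_of_cols n (map normalize_vec ws)) 0 = (1 / complex_of_real (sqrt (Re (v \<bullet>c v)))) \<cdot>\<^sub>v v"
    using ws \<open>n \<noteq> 0\<close> v by (simp add: col_mat_of_cols normalize_vec_def)
  with unitary_mat_of_orthogonal_cols[OF ws(1) ws(3) ws(2)] show ?thesis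
    by (rule that)
qed

text \<open>\<open>scalar_block a M\<close> is the block-diagonal matrix with the \<open>1 \<times> 1\<close> block \<open>a\<close> followed by \<open>M\<close>;
  the spectral theorem is proved by splitting off one eigenvalue in this form.\<close>

definition scalar_block :: "'a :: zero \<Rightarrow> 'a mat \<Rightarrow> 'a mat" where
  "scalar_block a M = four_block_mat (mat 1 1 (\<lambda>_. a)) (0\<^sub>m 1 (dim_col M)) (0\<^sub>m (dim_row M) 1) M"

lemma scalar_block_dim [simp]:
  "dim_row (scalar_block a M) = Suc (dim_row M)" "dim_col (scalar_block a M) = Suc (dim_col M)"
  by (simp_all add: scalar_block_def)

lemma scalar_block_carrier [simp]:
  "M \<in> carrier_mat m k \<Longrightarrow> scalar_block a M \<in> carrier_mat (Suc m) (Suc k)"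
  by (metis carrier_matD carrier_matI scalar_block_dim)

lemma scalar_block_index:
  "i < Suc (dim_row M) \<Longrightarrow> j < Suc (dim_col M) \<Longrightarrow> scalar_block a M $$ (i, j) =
    (if i = 0 \<and> j = 0 then a else if i = 0 \<or> j = 0 then 0 else M $$ (i - 1, j - 1))"
  by (simp add: scalar_block_def)

lemma scalar_block_mult:
  fixes M N :: "'a :: comm_ring_1 mat"
  assumes M: "M \<in> carrier_mat m k" and N: "N \<in> carrier_mat k l"
  shows "scalar_block a M * scalar_block b N = scalar_block (a * b) (M * N)"
proof -
  have "mat 1 1 (\<lambda>_. a) * mat 1 1 (\<lambda>_. b) = mat 1 1 (\<lambda>_. a * b)"
    by (rule eq_matI) (simp_all add: scalar_prod_def)
  with M N show ?thesis
    unfolding scalar_block_def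
    by (subst mult_four_block_mat[of _ 1 1 _ k _ m _ _ 1 _ l])
      (simp_all add: carrier_matD[OF M] carrier_matD[OF N])
qed

lemma scalar_block_adjoint:
  "mat_adjoint (scalar_block a M :: complex mat) = scalar_block (cnj a) (mat_adjoint M)"
  by (rule eq_matI) (auto simp: scalar_block_index)

lemma scalar_block_one: "scalar_block 1 (1\<^sub>m m) = (1\<^sub>m (Suc m) :: 'a :: comm_ring_1 mat)"
  by (rule eq_matI) (auto simp: scalar_block_index)

lemma scalar_block_mat_diag:
  "scalar_block a (mat_diag m f) = mat_diag (Suc m) (\<lambda>i. if i = 0 then a else f (i - 1))"
  by (rule eq_matI) (auto simp: scalar_block_index mat_diag_def)

lemma unitary_mat_scalar_block:
  assumes V: "unitary_mat m V"
  shows "unitary_mat (Suc m) (scalar_block 1 V)"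
  using V scalar_block_one[of m]
  by (auto simp: unitary_mat_def scalar_block_adjoint scalar_block_mult[where m = m and k = m and l = m])

section \<open>The spectral theorem for Hermitian matrices\<close>

text \<open>Over the complex numbers the characteristic polynomial splits, so every square matrix of
  positive size has an eigenvector.\<close>

lemma eigenvector_exists:
  fixes A :: "complex mat"
  assumes A: "A \<in> carrier_mat (Suc m) (Suc m)"
  shows "\<exists>v e. v \<in> carrier_vec (Suc m) \<and> v \<noteq> 0\<^sub>v (Suc m) \<and> A *\<^sub>v v = e \<cdot>\<^sub>v v"
proof -
  obtain es where "char_poly A = (\<Prod>a \<leftarrow> es. [:- a, 1:])" "length es = Suc m"
    using char_poly_factorized[OF A] by blast
  then obtain e where "poly (char_poly A) e = 0"
    by (cases es) auto
  then obtain v where "eigenvector A v e"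
    using eigenvalue_root_char_poly[OF A] unfolding eigenvalue_def by blast
  thus ?thesis
    using A unfolding eigenvector_def by auto
qed

lemma eigenvector_first_column:
  fixes A U :: "complex mat"
  assumes A: "A \<in> carrier_mat n n" and U: "unitary_mat n U" and eig: "A *\<^sub>v col U 0 = e \<cdot>\<^sub>v col U 0"
    and i: "i < n"
  shows "(mat_adjoint U * A * U) $$ (i, 0) = (if i = 0 then e else 0)"
proof -
  have cU: "U \<in> carrier_mat n n" and UU: "mat_adjoint U * U = 1\<^sub>m n"
    using U unfolding unitary_mat_def by auto
  have "(mat_adjoint U * A * U) $$ (i, 0) = row (mat_adjoint U) i \<bullet> col (A * U) 0"
    using A cU i by (simp add: square_mat_simps[where n = n])
  also have "col (A * U) 0 = e \<cdot>\<^sub>v col U 0"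
    using col_mult2[OF A cU, of 0] eig i by simp
  also have "row (mat_adjoint U) i \<bullet> (e \<cdot>\<^sub>v col U 0) = e * (mat_adjoint U * U) $$ (i, 0)"
    using cU i by simp
  finally show ?thesis
    using i by (simp add: UU)
qed

lemma hermitian_deflation:
  fixes A U :: "complex mat"
  assumes A: "A \<in> carrier_mat (Suc m) (Suc m)" and hA: "mat_adjoint A = A"
    and U: "unitary_mat (Suc m) U" and eig: "A *\<^sub>v col U 0 = e \<cdot>\<^sub>v col U 0"
  obtains A' where "A' \<in> carrier_mat m m" "mat_adjoint A' = A'"
    "mat_adjoint U * A * U = scalar_block e A'"
proof -
  define n where "n = Suc m"
  have cU: "U \<in> carrier_mat n n"
    using U unfolding unitary_mat_def n_def by auto
  have cA: "A \<in> carrier_mat n n" using A unfolding n_def .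
  define B where "B = mat_adjoint U * A * U"
  define A' where "A' = mat m m (\<lambda>(i, j). B $$ (Suc i, Suc j))"
  have cB: "B \<in> carrier_mat n n"
    unfolding B_def using cA cU by (simp add: square_mat_simps[where n = n])
  have hB: "mat_adjoint B = B"
    unfolding B_def using cA cU by (simp add: square_mat_simps[where n = n] hA)
  have col0: "i < n \<Longrightarrow> B $$ (i, 0) = (if i = 0 then e else 0)" for i
    unfolding B_def n_def using eigenvector_first_column[OF A U eig] .
  have entry: "i < n \<Longrightarrow> j < n \<Longrightarrow> B $$ (i, j) = cnj (B $$ (j, i))" for i j
    using cB by (metis hB carrier_matD index_mat_adjoint conjugate_complex_def)
  have row0: "0 < j \<Longrightarrow> j < n \<Longrightarrow> B $$ (0, j) = 0" for j
    using entry[of 0 j] col0[of j] by simp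
  have "B = scalar_block e A'"
  proof (rule eq_matI)
    fix i j assume "i < dim_row (scalar_block e A')" "j < dim_col (scalar_block e A')"
    hence i: "i < n" and j: "j < n" by (simp_all add: A'_def n_def)
    show "B $$ (i, j) = scalar_block e A' $$ (i, j)"
      using col0[OF i] row0[of j] i j
      by (cases i; cases j) (simp_all add: scalar_block_index A'_def n_def)
  qed (use cB in \<open>simp_all add: A'_def n_def\<close>)
  moreover have "mat_adjoint A' = A'"
  proof (rule eq_matI)
    fix i j assume "i < dim_row A'" "j < dim_col A'"
    hence "Suc i < n" "Suc j < n" by (simp_all add: A'_def n_def)
    thus "mat_adjoint A' $$ (i, j) = A' $$ (i, j)"
      using entry[of "Suc i" "Suc j"] by (simp add: A'_def n_def)
  qed (simp_all add: A'_def)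
  ultimately show ?thesis
    using that[of A'] unfolding B_def A'_def by auto
qed

text \<open>Spectral theorem: a Hermitian matrix is unitarily diagonalisable.  By induction on the size,
  deflating one eigenvector (completed to a unitary basis) at a time.\<close>

theorem hermitian_unitary_diagonalization:
  fixes A :: "complex mat"
  assumes "A \<in> carrier_mat n n" and "mat_adjoint A = A"
  shows "\<exists>U d. unitary_mat n U \<and> A = U * mat_diag n d * mat_adjoint U"
  using assms
proof (induction n arbitrary: A)
  case 0
  have "A = 1\<^sub>m 0 * mat_diag 0 (\<lambda>_. 0) * mat_adjoint (1\<^sub>m 0)"
    using 0 by (auto simp: mat_diag_def)
  moreover have "unitary_mat 0 (1\<^sub>m 0)"
    by (simp add: unitary_mat_def)
  ultimately show ?case by blast
next
  case (Suc m A)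
  obtain v e where v: "v \<in> carrier_vec (Suc m)" "v \<noteq> 0\<^sub>v (Suc m)" and Av: "A *\<^sub>v v = e \<cdot>\<^sub>v v"
    using eigenvector_exists[OF Suc.prems(1)] by blast
  obtain U c where U: "unitary_mat (Suc m) U" and U0: "col U 0 = c \<cdot>\<^sub>v v"
    using unitary_mat_with_first_column[OF v] .
  have "A *\<^sub>v col U 0 = e \<cdot>\<^sub>v col U 0"
    using Suc.prems(1) v Av by (simp add: U0 mult_mat_vec smult_smult_assoc mult.commute)
  then obtain A' where A': "A' \<in> carrier_mat m m" "mat_adjoint A' = A'"
    and UAU: "mat_adjoint U * A * U = scalar_block e A'"
    using hermitian_deflation[OF Suc.prems U] by blast
  obtain V d where V: "unitary_mat m V" and A'_eq: "A' = V * mat_diag m d * mat_adjoint V"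
    using Suc.IH[OF A'] by blast
  define W where "W = scalar_block 1 V"
  define D where "D = mat_diag (Suc m) (\<lambda>i. if i = 0 then e else d (i - 1))"
  have cV: "V \<in> carrier_mat m m" using V unfolding unitary_mat_def by simp
  have W: "unitary_mat (Suc m) W"
    unfolding W_def using V by (rule unitary_mat_scalar_block)
  have cU: "U \<in> carrier_mat (Suc m) (Suc m)" and cW: "W \<in> carrier_mat (Suc m) (Suc m)"
    using U W unfolding unitary_mat_def by auto
  have "scalar_block e A' = W * D * mat_adjoint W"
    unfolding W_def D_def A'_eq scalar_block_adjoint scalar_block_mat_diag[symmetric] using cV
    by (simp add: scalar_block_mult[where m = m and k = m and l = m])
  moreover have "A = U * scalar_block e A' * mat_adjoint U"
    using UAU by (rule unitary_similar_iff[OF U Suc.prems(1) scalar_block_carrier[OF A'(1)], THEN iffD2])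
  ultimately have "A = (U * W) * D * mat_adjoint (U * W)"
    using cU cW by (simp add: D_def square_mat_simps[where n = "Suc m"])
  with unitary_mat_mult[OF U W] show ?case unfolding D_def by blast
qed

section \<open>Positive semidefinite matrices and their square roots\<close>

lemma psd_matD:
  assumes "psd_mat n A"
  shows "A \<in> carrier_mat n n" "mat_adjoint A = A"
  using assms unfolding psd_mat_def by auto

lemma complex_sqrt_nonneg:
  fixes z :: complex
  assumes "0 \<le> z"
  shows "complex_of_real (sqrt (Re z)) * complex_of_real (sqrt (Re z)) = z"
  using assms by (simp add: less_eq_complex_def complex_eq_iff flip: of_real_mult)

lemma psd_mat_gram:
  fixes X :: "complex mat"
  assumes X: "X \<in> carrier_mat n k"
  shows "psd_mat n (X * mat_adjoint X)"
proof -
  have "mat_adjoint (X * mat_adjoint X) = X * mat_adjoint X"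
    using X by (simp add: mat_adjoint_mult[of X n k "mat_adjoint X" n])
  moreover have "0 \<le> conjugate v \<bullet> ((X * mat_adjoint X) *\<^sub>v v)" if v: "v \<in> carrier_vec n" for v
  proof -
    define w where "w = mat_adjoint X *\<^sub>v v"
    have w: "w \<in> carrier_vec k"
      unfolding w_def using mat_adjoint_carrier[OF X] v by (rule mult_mat_vec_carrier)
    have "conjugate v \<bullet> ((X * mat_adjoint X) *\<^sub>v v) = conjugate v \<bullet> (X *\<^sub>v w)"
      unfolding w_def using X v by (simp add: assoc_mult_mat_vec[of X n k _ n])
    also have "\<dots> = conjugate w \<bullet> w"
      using sesquilinear_mat_adjoint[OF X v w] by (simp only: w_def)
    also have "\<dots> = w \<bullet>c w"
      using w by (simp add: comm_scalar_prod[of _ k])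
    finally show ?thesis
      using conjugate_square_ge_0_vec[of w] by simp
  qed
  ultimately show ?thesis
    unfolding psd_mat_def using X by (simp add: mult_carrier_mat[of X n k _ n])
qed

text \<open>Hence \<open>U diag(r) U\<^sup>*\<close> is positive semidefinite when all \<open>r i \<ge> 0\<close>: it is the Gram matrix of
  \<open>U diag(\<surd>r)\<close>.\<close>

lemma psd_mat_unitary_diag:
  assumes U: "U \<in> carrier_mat n n" and r: "\<And>i. i < n \<Longrightarrow> 0 \<le> r i"
  shows "psd_mat n (U * mat_diag n r * mat_adjoint U)"
proof -
  define q where "q i = complex_of_real (sqrt (Re (r i)))" for i
  have "mat_diag n q * mat_adjoint (mat_diag n q) = mat_diag n (\<lambda>i. q i * cnj (q i))"
    by (simp add: mat_adjoint_mat_diag)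
  also have "\<dots> = mat_diag n r"
    by (rule eq_matI) (auto simp: mat_diag_def q_def complex_sqrt_nonneg r)
  finally have "mat_diag n r = mat_diag n q * mat_adjoint (mat_diag n q)" ..
  hence "U * mat_diag n r * mat_adjoint U = (U * mat_diag n q) * mat_adjoint (U * mat_diag n q)"
    using U by (simp add: square_mat_simps[where n = n])
  thus ?thesis
    using psd_mat_gram[of "U * mat_diag n q" n n] U by simp
qed

lemma conjugated_diagonal_entry:
  fixes X V :: "complex mat"
  assumes X: "X \<in> carrier_mat n n" and V: "V \<in> carrier_mat n n" and i: "i < n"
  shows "(mat_adjoint V * X * V) $$ (i, i) = conjugate (col V i) \<bullet> (X *\<^sub>v col V i)"
proof -
  have "(mat_adjoint V * X * V) $$ (i, i) = row (mat_adjoint V) i \<bullet> col (X * V) i"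
    using X V i by (simp add: square_mat_simps[where n = n])
  also have "col (X * V) i = X *\<^sub>v col V i"
    using X V i by (rule col_mult2)
  also have "row (mat_adjoint V) i = conjugate (col V i)"
    using V i by simp
  finally show ?thesis .
qed

lemma psd_conjugated_diagonal_nonneg:
  assumes A: "psd_mat n A" and V: "V \<in> carrier_mat n n" and i: "i < n"
  shows "0 \<le> (mat_adjoint V * A * V) $$ (i, i)"
proof -
  have "col V i \<in> carrier_vec n"
    using i V by simp
  thus ?thesis
    using A unfolding conjugated_diagonal_entry[OF psd_matD(1)[OF A] V i] psd_mat_def by blast
qed

text \<open>Existence of a PSD square root: diagonalise \<open>A = U diag(d) U\<^sup>*\<close> (so all \<open>d i \<ge> 0\<close>) and take
  \<open>U diag(\<surd>d) U\<^sup>*\<close>.\<close>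

lemma psd_sqrt_exists:
  assumes A: "psd_mat n A"
  obtains S where "psd_mat n S" "S * S = A"
proof -
  have cA: "A \<in> carrier_mat n n" and hA: "mat_adjoint A = A"
    using psd_matD[OF A] .
  obtain U d where U: "unitary_mat n U" and AU: "A = U * mat_diag n d * mat_adjoint U"
    using hermitian_unitary_diagonalization[OF cA hA] by blast
  have cU: "U \<in> carrier_mat n n"
    using U unfolding unitary_mat_def by auto
  have UAU: "mat_adjoint U * A * U = mat_diag n d"
    using AU by (rule unitary_similar_iff[OF U cA mat_diag_dim, THEN iffD1])
  have d: "0 \<le> d i" if "i < n" for i
    using psd_conjugated_diagonal_nonneg[OF A cU that] that unfolding UAU by (simp add: mat_diag_def)
  define r where "r i = complex_of_real (sqrt (Re (d i)))" for i
  define S where "S = U * mat_diag n r * mat_adjoint U"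
  have "psd_mat n S"
    unfolding S_def r_def using cU by (rule psd_mat_unitary_diag) (use d in \<open>simp add: less_eq_complex_def\<close>)
  moreover have "S * S = A"
  proof -
    have "S * S = U * (mat_diag n r * mat_diag n r) * mat_adjoint U"
      unfolding S_def using cU
      by (simp add: square_mat_simps[where n = n] unitary_mat_cancel[OF U, where k = n] del: mat_diag_diag)
    also have "mat_diag n r * mat_diag n r = mat_diag n d"
      unfolding mat_diag_diag by (rule eq_matI) (auto simp: mat_diag_def r_def complex_sqrt_nonneg d)
    finally show ?thesis
      using AU by simp
  qed
  ultimately show ?thesis by (rule that)
qed

text \<open>Indeed
  \<open>S(S - T) + (S - T)T = S\<^sup>2 - T\<^sup>2 = 0\<close> gives \<open>m\<^sub>i (S\<^sub>i\<^sub>i + T\<^sub>i\<^sub>i) = 0\<close>, while \<open>m\<^sub>i = S\<^sub>i\<^sub>i - T\<^sub>i\<^sub>i\<close>;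
  hence every \<open>m\<^sub>i = 0\<close>.\<close>

lemma equal_squares_diagonal_difference:
  fixes S T :: "complex mat"
  assumes cS: "S \<in> carrier_mat n n" and cT: "T \<in> carrier_mat n n" and squares: "S * S = T * T"
    and diff: "S - T = mat_diag n m"
    and nonneg: "\<And>i. i < n \<Longrightarrow> 0 \<le> S $$ (i, i)" "\<And>i. i < n \<Longrightarrow> 0 \<le> T $$ (i, i)"
  shows "S = T"
proof -
  have m0: "m i = 0" if i: "i < n" for i
  proof -
    have "S * (S - T) + (S - T) * T = S * S - S * T + (S * T - T * T)"
      using cS cT by (simp add: square_mat_simps[where n = n])
    hence "(S * mat_diag n m + mat_diag n m * T) $$ (i, i) = 0"
      using cS cT i by (simp add: diff squares)
    hence prod: "m i * (S $$ (i, i) + T $$ (i, i)) = 0"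
      using cS cT i by (simp add: mat_diag_mult_left[OF cT] mat_diag_mult_right[OF cS] algebra_simps)
    have "m i = S $$ (i, i) - T $$ (i, i)"
      using arg_cong[OF diff, of "\<lambda>M. M $$ (i, i)"] cS cT i by (simp add: mat_diag_def)
    thus "m i = 0"
      using prod nonneg[OF i] by (auto simp: add_nonneg_eq_0_iff)
  qed
  show "S = T"
  proof (rule eq_matI)
    fix i j assume ij: "i < dim_row T" "j < dim_col T"
    have "(S - T) $$ (i, j) = 0"
      using ij cT m0 unfolding diff by (simp add: mat_diag_def)
    thus "S $$ (i, j) = T $$ (i, j)"
      using ij cS cT by simp
  qed (use cS cT in simp_all)
qed

text \<open>Uniqueness of PSD square roots: diagonalise \<open>S - T = V diag(m) V\<^sup>*\<close> and apply the previous
  lemma to \<open>V\<^sup>* S V\<close> and \<open>V\<^sup>* T V\<close>, whose diagonal entries are values of quadratic forms.\<close>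

lemma psd_sqrt_unique:
  assumes S: "psd_mat n S" and T: "psd_mat n T" and ST: "S * S = T * T"
  shows "S = T"
proof -
  note sq = square_mat_simps[where n = n]
  have cS: "S \<in> carrier_mat n n" and cT: "T \<in> carrier_mat n n"
    and hS: "mat_adjoint S = S" and hT: "mat_adjoint T = T"
    using psd_matD[OF S] psd_matD[OF T] by auto
  have cST: "S - T \<in> carrier_mat n n" using cT by (rule minus_carrier_mat)
  have "mat_adjoint (S - T) = S - T"
    using cS cT by (simp add: sq hS hT)
  then obtain V m where V: "unitary_mat n V" and SV: "S - T = V * mat_diag n m * mat_adjoint V"
    using hermitian_unitary_diagonalization[OF cST] by blast
  have cV: "V \<in> carrier_mat n n"
    using V unfolding unitary_mat_def by auto
  define S' where "S' = mat_adjoint V * S * V"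
  define T' where "T' = mat_adjoint V * T * V"
  have cS': "S' \<in> carrier_mat n n" and cT': "T' \<in> carrier_mat n n"
    unfolding S'_def T'_def using cS cT cV by (simp_all add: sq)
  have "mat_adjoint V * (S - T) * V = mat_diag n m"
    using SV by (rule unitary_similar_iff[OF V cST mat_diag_dim, THEN iffD1])
  hence diff: "S' - T' = mat_diag n m"
    unfolding S'_def T'_def using cS cT cV by (simp add: sq)
  have "S' * S' = mat_adjoint V * (S * S) * V" "T' * T' = mat_adjoint V * (T * T) * V"
    unfolding S'_def T'_def using cS cT cV by (simp_all add: sq unitary_mat_cancel[OF V, where k = n])
  hence squares: "S' * S' = T' * T'"
    unfolding ST by simp
  have "S' = T'"
    using cS' cT' squares diff
  proof (rule equal_squares_diagonal_difference)
    show "0 \<le> S' $$ (i, i)" "0 \<le> T' $$ (i, i)" if "i < n" for i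
      unfolding S'_def T'_def using psd_conjugated_diagonal_nonneg[OF _ cV that] S T by auto
  qed
  moreover have "S = V * S' * mat_adjoint V" "T = V * T' * mat_adjoint V"
    by (rule unitary_similar_iff[OF V cS cS', THEN iffD2], simp add: S'_def)
      (rule unitary_similar_iff[OF V cT cT', THEN iffD2], simp add: T'_def)
  ultimately show "S = T" by simp
qed

text \<open>Consequently the definite description in \<open>mat_sqrt\<close> is well defined.\<close>

lemma mat_sqrt_square:
  assumes A: "psd_mat n A"
  shows "psd_mat n (mat_sqrt A)" and "mat_sqrt A * mat_sqrt A = A"
proof -
  obtain S where S: "psd_mat n S" "S * S = A"
    using psd_sqrt_exists[OF A] .
  have unique: "\<exists>!S. psd_mat n S \<and> S * S = A"
  proof (rule ex1I)
    show "psd_mat n S \<and> S * S = A" using S by simp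
  next
    fix T assume "psd_mat n T \<and> T * T = A"
    thus "T = S" using psd_sqrt_unique[of n T S] S by simp
  qed
  have "dim_row A = n"
    using psd_matD(1)[OF A] by auto
  hence "psd_mat n (mat_sqrt A) \<and> mat_sqrt A * mat_sqrt A = A"
    unfolding mat_sqrt_def using theI'[OF unique] by simp
  thus "psd_mat n (mat_sqrt A)" "mat_sqrt A * mat_sqrt A = A" by auto
qed

theorem mainTheorem13:
  fixes A B :: "complex mat" and n :: nat
  assumes "psd_mat n A" and "psd_mat n B"
  shows "trace ((A + B) ^\<^sub>m 4) - trace (A ^\<^sub>m 4 + B ^\<^sub>m 4)
           \<ge> (2 ^ 4 - 2) * trace ((mat_sqrt A * B * mat_sqrt A) ^\<^sub>m 2)
       \<and> (2 ^ 4 - 2) * trace ((mat_sqrt A * B * mat_sqrt A) ^\<^sub>m 2)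
           = 14 * trace ((A * B) ^\<^sub>m 2)"
proof -
  define P where "P = mat_sqrt A"
  obtain Q where Q: "psd_mat n Q" and QQ: "Q * Q = B"
    using psd_sqrt_exists[OF assms(2)] .
  have P: "psd_mat n P" and PP: "P * P = A"
    unfolding P_def using mat_sqrt_square[OF assms(1)] by auto
  note carriers = psd_matD[OF assms(1)] psd_matD[OF assms(2)]
    psd_matD[OF P] psd_matD[OF Q]
  have "14 * trace ((A * B) ^\<^sub>m 2) \<le> trace ((A + B) ^\<^sub>m 4) - trace (A ^\<^sub>m 4 + B ^\<^sub>m 4)"
    using quartic_trace_inequality[OF carriers(1,3,5,7,6,8) PP QQ] .
  moreover have "trace ((P * B * P) ^\<^sub>m 2) = trace ((A * B) ^\<^sub>m 2)"
    using trace_sqrt_sandwich_sq[OF carriers(3,5) PP] .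
  ultimately show ?thesis
    by (simp add: P_def)
qed

end
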